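(* Every linearly closed proper subset of the abstract linear space $LS^3$ is empty, a single point, or an abstract line of $LS^3$.
   Context: $\mathbb{S}^3$ is the unit sphere of $\mathbb{C}^2$. The abstract linear space $LS^3$ has point set $\mathbb{S}^3$ and abstract lines the sets $L\cap\mathbb{S}^3$ where $L$ is a complex affine line of $\mathbb{C}^2$ meeting $\mathbb{S}^3$ in more than one point (i.e. non-tangential; such $L\cap\mathbb{S}^3$ is a round circle); any two distinct points of $\mathbb{S}^3$ lie on exactly one abstract line. A subset $A\subset\mathbb{S}^3$ is linearly closed if for any two distinct $x,y\in A$ the abstract line through $x$ and $y$ is contained in $A$. Proper means $A\neq\mathbb{S}^3$. *)

theory Defs
  imports "HOL-Analysis.Analysis"
begin

definition S3 :: "(complex \<times> complex) set" where
  "S3 = {(z, w). (cmod z)\<^sup>2 + (cmod w)\<^sup>2 = 1}"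

definition cline :: "complex \<times> complex \<Rightarrow> complex \<times> complex \<Rightarrow> (complex \<times> complex) set" where
  "cline p v = {(fst p + t * fst v, snd p + t * snd v) | t. True}"

definition complex_affine_line :: "(complex \<times> complex) set \<Rightarrow> bool" where
  "complex_affine_line L \<longleftrightarrow> (\<exists>p v. v \<noteq> (0, 0) \<and> L = cline p v)"

definition abstract_line :: "(complex \<times> complex) set \<Rightarrow> bool" where
  "abstract_line A \<longleftrightarrow> (\<exists>L. complex_affine_line L \<and> A = L \<inter> S3 \<and>
      (\<exists>x y. x \<in> L \<inter> S3 \<and> y \<in> L \<inter> S3 \<and> x \<noteq> y))"

definition linearly_closed :: "(complex \<times> complex) set \<Rightarrow> bool" where
  "linearly_closed A \<longleftrightarrow> A \<subseteq> S3 \<and>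
     (\<forall>x\<in>A. \<forall>y\<in>A. x \<noteq> y \<longrightarrow>
        (\<forall>l. abstract_line l \<and> x \<in> l \<and> y \<in> l \<longrightarrow> l \<subseteq> A))"

end

theory Submission
  imports Defs
begin

text \<open>Suppose A contains two points a, b and a point x off the complex line through them, and
  let w \<in> S3 - A. Every point y of the circle ab \<inter> S3 lies in A, hence so do the abstract lines
  xa and xy. If w were collinear with a point q of xa and a point r of xy, it would lie on the
  abstract line qr \<subseteq> A; after the substitution s = 1/\<sigma> the sphere conditions on q, r become
  real-affine in \<sigma>, \<tau> and collinearity becomes complex-affine, so such q, r exist unless a certain
  real sesquilinear expression in y vanishes. It would then vanish on the whole circle, which
  forces either some y = x or w = x -- both impossible. Hence S3 \<subseteq> A.\<close>

definition hinner :: "complex \<times> complex \<Rightarrow> complex \<times> complex \<Rightarrow> complex" where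
  "hinner p q = fst p * cnj (fst q) + snd p * cnj (snd q)"

definition det2 :: "complex \<times> complex \<Rightarrow> complex \<times> complex \<Rightarrow> complex" where
  "det2 p q = fst p * snd q - snd p * fst q"

definition cscale :: "complex \<Rightarrow> complex \<times> complex \<Rightarrow> complex \<times> complex" where
  "cscale t v = (t * fst v, t * snd v)"

lemma cnj_hinner: "cnj (hinner p q) = hinner q p"
  by (simp add: hinner_def mult.commute)

lemma hinner_diff_left: "hinner (p - q) r = hinner p r - hinner q r"
  and hinner_diff_right: "hinner p (q - r) = hinner p q - hinner p r"
  and hinner_add_left: "hinner (p + q) r = hinner p r + hinner q r"
  and hinner_add_right: "hinner p (q + r) = hinner p q + hinner p r"
  and hinner_cscale_left: "hinner (cscale t p) q = t * hinner p q"
  and hinner_cscale_right: "hinner p (cscale t q) = cnj t * hinner p q"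
  by (simp_all add: hinner_def cscale_def algebra_simps)

lemma det2_add_left: "det2 (p + q) r = det2 p r + det2 q r"
  and det2_add_right: "det2 p (q + r) = det2 p q + det2 p r"
  and det2_cscale_left: "det2 (cscale t p) q = t * det2 p q"
  and det2_cscale_right: "det2 p (cscale t q) = t * det2 p q"
  and det2_swap: "det2 q p = - det2 p q"
  and det2_self: "det2 p p = 0"
  by (simp_all add: det2_def cscale_def algebra_simps)

lemma hinner_self: "hinner p p = of_real ((norm p)\<^sup>2)"
proof -
  have "(norm p)\<^sup>2 = (cmod (fst p))\<^sup>2 + (cmod (snd p))\<^sup>2"
    by (cases p) (simp add: norm_Pair)
  then show ?thesis
    by (simp only: hinner_def of_real_add complex_norm_square)
qed

lemma hinner_self_eq_0_iff: "hinner p p = 0 \<longleftrightarrow> p = 0"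
  by (simp add: hinner_self)

lemma mem_S3_iff: "p \<in> S3 \<longleftrightarrow> norm p = 1"
  by (cases p) (simp add: S3_def norm_Pair)

lemma mem_S3_iff_hinner: "p \<in> S3 \<longleftrightarrow> hinner p p = 1"
  by (simp add: hinner_self mem_S3_iff flip: of_real_power)
     (metis abs_norm_cancel abs_square_eq_1)

lemma S3_eq_if_hinner_diff_eq_0:
  assumes "p \<in> S3" "x \<in> S3" "hinner (p - x) x = 0"
  shows "p = x"
proof -
  have "hinner p x = 1"
    using assms(2,3) by (simp add: hinner_diff_left mem_S3_iff_hinner)
  then have "hinner x p = 1"
    by (metis cnj_hinner complex_cnj_one)
  then have "hinner (p - x) (p - x) = 0"
    using assms \<open>hinner p x = 1\<close>
    by (simp add: hinner_diff_left hinner_diff_right mem_S3_iff_hinner)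
  then show ?thesis by (simp add: hinner_self_eq_0_iff)
qed

lemma cscale_0 [simp]: "cscale 0 v = 0"
  and cscale_1 [simp]: "cscale 1 v = v"
  by (simp_all add: cscale_def zero_prod_def)

lemma mem_cline_iff: "x \<in> cline p v \<longleftrightarrow> (\<exists>t. x = p + cscale t v)"
  by (auto simp: cline_def cscale_def prod_eq_iff)

lemma mem_cline_self: "p \<in> cline p v" "q \<in> cline p (q - p)"
proof -
  have "p = p + cscale 0 v" "q = p + cscale 1 (q - p)"
    by simp_all
  then show "p \<in> cline p v" "q \<in> cline p (q - p)"
    unfolding mem_cline_iff by blast+
qed

lemma det2_eq_0_iff_parallel:
  assumes "v \<noteq> 0"
  shows "det2 u v = 0 \<longleftrightarrow> (\<exists>t. u = cscale t v)"
proof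
  assume h: "det2 u v = 0"
  obtain u1 u2 v1 v2 where uv: "u = (u1, u2)" "v = (v1, v2)" by fastforce
  have "u1 = (u1 / v1) * v1 \<and> u2 = (u1 / v1) * v2" if "v1 \<noteq> 0"
    using h that by (simp add: uv det2_def field_simps)
  moreover have "u1 = (u2 / v2) * v1 \<and> u2 = (u2 / v2) * v2" if "v1 = 0"
    using h that assms by (auto simp: uv det2_def zero_prod_def)
  ultimately have "\<exists>t. u1 = t * v1 \<and> u2 = t * v2"
    by blast
  then show "\<exists>t. u = cscale t v"
    by (simp add: uv cscale_def)
qed (auto simp: det2_cscale_left det2_self)

lemma det2_ne_0_if_not_mem_cline:
  assumes "x \<notin> cline a e" "e \<noteq> 0"
  shows "det2 (a - x) e \<noteq> 0"
proof
  assume "det2 (a - x) e = 0"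
  then obtain t where "a - x = cscale t e"
    using det2_eq_0_iff_parallel assms(2) by blast
  then have "x = a + cscale (- t) e"
    by (simp add: cscale_def algebra_simps prod_eq_iff)
  then show False
    using assms(1) mem_cline_iff by blast
qed

lemma abstract_line_through:
  assumes "p \<in> S3" "q \<in> S3" "p \<noteq> q"
  shows "abstract_line (cline p (q - p) \<inter> S3)"
proof -
  have "q - p \<noteq> (0, 0)"
    using assms(3) by (simp flip: zero_prod_def)
  then have "complex_affine_line (cline p (q - p))"
    unfolding complex_affine_line_def by blast
  moreover have "p \<in> cline p (q - p) \<inter> S3" "q \<in> cline p (q - p) \<inter> S3"
    using assms by (simp_all add: mem_cline_self)
  ultimately show ?thesis
    unfolding abstract_line_def using assms(3) by blast
qed

lemma linearly_closed_subset_S3: "linearly_closed A \<Longrightarrow> A \<subseteq> S3"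
  by (simp add: linearly_closed_def)

lemma linearly_closed_line_subset:
  assumes "linearly_closed A" "p \<in> A" "q \<in> A" "p \<noteq> q"
  shows "cline p (q - p) \<inter> S3 \<subseteq> A"
proof -
  have "p \<in> S3" "q \<in> S3"
    using assms linearly_closed_subset_S3 by blast+
  moreover have "p \<in> cline p (q - p)" "q \<in> cline p (q - p)"
    by (simp_all add: mem_cline_self)
  moreover have "\<forall>l. abstract_line l \<and> p \<in> l \<and> q \<in> l \<longrightarrow> l \<subseteq> A"
    using assms unfolding linearly_closed_def by blast
  ultimately show ?thesis
    using assms(4) abstract_line_through by blast
qed

lemma linearly_closed_add_cscale_mem:
  assumes "linearly_closed A" "p \<in> A" "q \<in> A" "p \<noteq> q" "p + cscale t (q - p) \<in> S3"
  shows "p + cscale t (q - p) \<in> A"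
  using linearly_closed_line_subset[OF assms(1-4)] assms(5) mem_cline_iff by blast

lemma linearly_closed_mem_if_det2_eq_0:
  assumes "linearly_closed A" "p \<in> A" "q \<in> A" "p \<noteq> q" "w \<in> S3"
    and "det2 (p - w) (q - w) = 0"
  shows "w \<in> A"
proof -
  have "det2 (w - p) (q - p) = 0"
    using assms(6) by (simp add: det2_def algebra_simps)
  moreover have "q - p \<noteq> 0"
    using assms(4) by simp
  ultimately obtain t where "w - p = cscale t (q - p)"
    using det2_eq_0_iff_parallel by blast
  then have "w = p + cscale t (q - p)"
    by (subst add.commute) (simp add: diff_eq_eq)
  then have "w \<in> cline p (q - p)"
    unfolding mem_cline_iff by blast
  then show ?thesis
    using linearly_closed_line_subset[OF assms(1-4)] assms(5) by blast
qed

lemma add_cscale_mem_S3_iff: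
  assumes "x \<in> S3"
  shows "x + cscale s v \<in> S3 \<longleftrightarrow> (cmod s)\<^sup>2 * (norm v)\<^sup>2 + 2 * Re (s * hinner v x) = 0"
proof -
  have "hinner (x + cscale s v) (x + cscale s v)
        = hinner x x + (s * hinner v x + cnj (s * hinner v x)) + (s * cnj s) * hinner v v"
    by (simp add: hinner_add_left hinner_add_right hinner_cscale_left hinner_cscale_right
        cnj_hinner algebra_simps)
  also have "\<dots> = 1 + of_real ((cmod s)\<^sup>2 * (norm v)\<^sup>2 + 2 * Re (s * hinner v x))"
    using assms complex_add_cnj[of "s * hinner v x"] complex_norm_square[of s]
    by (simp add: mem_S3_iff_hinner hinner_self)
  finally have "hinner (x + cscale s v) (x + cscale s v)
        = 1 + of_real ((cmod s)\<^sup>2 * (norm v)\<^sup>2 + 2 * Re (s * hinner v x))" .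
  then show ?thesis
    by (simp only: mem_S3_iff_hinner add_cancel_left_right of_real_eq_0_iff)
qed

lemma circle_equation:
  fixes N :: real and g s :: complex
  assumes "N > 0"
  shows "(cmod s)\<^sup>2 * N + 2 * Re (s * g) = N * ((cmod (s + cnj g / N))\<^sup>2 - (cmod g / N)\<^sup>2)"
proof -
  obtain g1 g2 s1 s2 where "g = Complex g1 g2" "s = Complex s1 s2"
    by (meson complex.exhaust_sel)
  then show ?thesis
    using assms by (simp add: power_divide cmod_power2) (simp add: field_simps power2_eq_square)
qed

lemma S3_points_of_line_form_circle:
  assumes "a \<in> S3" "a + e \<in> S3" "e \<noteq> 0"
  obtains m r where "r > 0" "\<And>s. a + cscale s e \<in> S3 \<longleftrightarrow> cmod (s - m) = r"
proof -
  define N where "N = (norm e)\<^sup>2"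
  define g where "g = hinner e a"
  have "N > 0"
    using assms(3) by (simp add: N_def)
  have "N + 2 * Re g = 0"
    using add_cscale_mem_S3_iff[OF assms(1), of 1 e] assms(2) by (simp add: N_def g_def)
  then have "g \<noteq> 0"
    using \<open>N > 0\<close> by auto
  have "a + cscale s e \<in> S3 \<longleftrightarrow> cmod (s - (- cnj g / N)) = cmod g / N" for s
  proof -
    have "a + cscale s e \<in> S3 \<longleftrightarrow> (cmod (s + cnj g / N))\<^sup>2 = (cmod g / N)\<^sup>2"
      using add_cscale_mem_S3_iff[OF assms(1)] circle_equation[OF \<open>N > 0\<close>] \<open>N > 0\<close>
      by (simp add: N_def g_def)
    also have "\<dots> \<longleftrightarrow> cmod (s + cnj g / N) = cmod g / N"
      using \<open>N > 0\<close> by (simp add: power2_eq_iff_nonneg)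
    finally show ?thesis
      by simp
  qed
  moreover have "cmod g / N > 0"
    using \<open>g \<noteq> 0\<close> \<open>N > 0\<close> by simp
  ultimately show ?thesis
    using that by blast
qed

lemma Re_linear_system_solvable:
  fixes m1 m2 :: complex and k1 k2 :: real
  assumes "Im (m1 * cnj m2) \<noteq> 0"
  obtains \<sigma> where "Re (m1 * \<sigma>) = k1" "Re (m2 * \<sigma>) = k2"
proof -
  define \<sigma> where "\<sigma> = \<i> * (k2 * cnj m1 - k1 * cnj m2) / Im (m1 * cnj m2)"
  have "Re (m1 * \<sigma>) = k1" "Re (m2 * \<sigma>) = k2"
    using assms by (simp_all add: \<sigma>_def Re_divide_of_real field_simps)
  then show ?thesis
    using that by blast
qed

lemma add_cscale_inverse_mem_S3_iff:
  assumes "x \<in> S3" "\<sigma> \<noteq> 0"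
  shows "x + cscale (1 / \<sigma>) v \<in> S3 \<longleftrightarrow> 2 * Re (cnj (hinner v x) * \<sigma>) = - (norm v)\<^sup>2"
proof -
  obtain g1 g2 s1 s2 where g: "hinner v x = Complex g1 g2" and s: "\<sigma> = Complex s1 s2"
    by (meson complex.exhaust_sel)
  have "s1\<^sup>2 + s2\<^sup>2 > 0"
    using assms(2) s by (simp add: complex_eq_iff sum_power2_gt_zero_iff)
  then have eq: "(cmod (1 / \<sigma>))\<^sup>2 * (norm v)\<^sup>2 + 2 * Re (1 / \<sigma> * hinner v x)
      = ((norm v)\<^sup>2 + 2 * Re (cnj (hinner v x) * \<sigma>)) / (s1\<^sup>2 + s2\<^sup>2)"
    unfolding g s
    by (simp add: norm_divide power_divide cmod_power2 Re_divide)
       (simp add: field_simps power2_eq_square add_divide_distrib)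
  have "x + cscale (1 / \<sigma>) v \<in> S3
      \<longleftrightarrow> ((norm v)\<^sup>2 + 2 * Re (cnj (hinner v x) * \<sigma>)) / (s1\<^sup>2 + s2\<^sup>2) = 0"
    unfolding add_cscale_mem_S3_iff[OF assms(1)] eq ..
  also have "\<dots> \<longleftrightarrow> 2 * Re (cnj (hinner v x) * \<sigma>) = - (norm v)\<^sup>2"
    using \<open>s1\<^sup>2 + s2\<^sup>2 > 0\<close> by auto
  finally show ?thesis .
qed

lemma S3_points_collinear_with_point:
  assumes "x \<in> S3"
    and R: "det2 \<alpha> \<gamma> \<noteq> 0" and Q: "det2 \<alpha> \<beta> \<noteq> 0" and P: "det2 \<beta> \<gamma> \<noteq> 0"
    and D: "Im (cnj (hinner \<alpha> x * cnj (det2 \<alpha> \<beta>)) * (hinner \<gamma> x * cnj (det2 \<gamma> \<beta>))) \<noteq> 0"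
  obtains s t where "s \<noteq> 0" "x + cscale s \<alpha> \<in> S3" "x + cscale t \<gamma> \<in> S3"
    "det2 (\<beta> + cscale s \<alpha>) (\<beta> + cscale t \<gamma>) = 0"
proof -
  define gA where "gA = hinner \<alpha> x"
  define gG where "gG = hinner \<gamma> x"
  define m2 where "m2 = cnj gG * det2 \<beta> \<gamma> / det2 \<alpha> \<beta>"
  have "cnj gA * cnj m2 = - (cnj (gA * cnj (det2 \<alpha> \<beta>)) * (gG * cnj (det2 \<gamma> \<beta>)))
      / of_real ((cmod (det2 \<alpha> \<beta>))\<^sup>2)"
    unfolding complex_norm_square
    using Q by (simp add: m2_def gA_def gG_def det2_swap[of \<gamma>] field_simps)
  then have "Im (cnj gA * cnj m2) \<noteq> 0"
    using D Q by (simp add: Im_divide_of_real gA_def gG_def)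
  then obtain \<sigma> where \<sigma>: "Re (cnj gA * \<sigma>) = - (norm \<alpha>)\<^sup>2 / 2"
    and \<sigma>': "Re (m2 * \<sigma>) = (norm \<gamma>)\<^sup>2 / 2 - Re (cnj gG * det2 \<alpha> \<gamma> / det2 \<alpha> \<beta>)"
    using Re_linear_system_solvable by blast
  \<comment> \<open>collinearity of the points with parameters 1/\<sigma>, 1/\<tau> is this affine relation\<close>
  define \<tau> where "\<tau> = - (det2 \<alpha> \<gamma> + det2 \<beta> \<gamma> * \<sigma>) / det2 \<alpha> \<beta>"
  have "cnj gG * \<tau> = - (cnj gG * det2 \<alpha> \<gamma> / det2 \<alpha> \<beta>) - m2 * \<sigma>"
    using Q by (simp add: \<tau>_def m2_def field_simps)
  then have "Re (cnj gG * \<tau>) = - Re (cnj gG * det2 \<alpha> \<gamma> / det2 \<alpha> \<beta>) - Re (m2 * \<sigma>)"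
    by (simp only: minus_complex.sel uminus_complex.sel)
  with \<sigma>' have \<tau>: "Re (cnj gG * \<tau>) = - (norm \<gamma>)\<^sup>2 / 2"
    by linarith
  have "\<alpha> \<noteq> 0" "\<gamma> \<noteq> 0"
    using R by (auto simp: det2_def)
  then have "\<sigma> \<noteq> 0" "\<tau> \<noteq> 0"
    using \<sigma> \<tau> by auto
  have "x + cscale (1 / \<sigma>) \<alpha> \<in> S3" "x + cscale (1 / \<tau>) \<gamma> \<in> S3"
    using add_cscale_inverse_mem_S3_iff[OF \<open>x \<in> S3\<close>] \<sigma> \<tau> \<open>\<sigma> \<noteq> 0\<close> \<open>\<tau> \<noteq> 0\<close>
    by (simp_all add: gA_def gG_def)
  moreover have "det2 (\<beta> + cscale (1 / \<sigma>) \<alpha>) (\<beta> + cscale (1 / \<tau>) \<gamma>)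
      = (det2 \<beta> \<gamma> * \<sigma> + det2 \<alpha> \<beta> * \<tau> + det2 \<alpha> \<gamma>) / (\<sigma> * \<tau>)"
    using \<open>\<sigma> \<noteq> 0\<close> \<open>\<tau> \<noteq> 0\<close>
    by (simp add: det2_add_left det2_add_right det2_cscale_left det2_cscale_right det2_self
        det2_swap[of \<beta> \<alpha>] field_simps)
  moreover have "det2 \<beta> \<gamma> * \<sigma> + det2 \<alpha> \<beta> * \<tau> + det2 \<alpha> \<gamma> = 0"
    using Q by (simp add: \<tau>_def field_simps)
  ultimately show ?thesis
    using that[of "1 / \<sigma>" "1 / \<tau>"] \<open>\<sigma> \<noteq> 0\<close> by simp
qed

lemma real_quadratic_vanishing_on_circle:
  fixes q0 q2 r :: real and q1 m s :: complex
  assumes r: "r > 0"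
    and h: "\<And>z. cmod (z - m) = r \<Longrightarrow> q0 + Re (q1 * z) + q2 * (cmod z)\<^sup>2 = 0"
  shows "q0 + Re (q1 * s) + q2 * (cmod s)\<^sup>2 = q2 * ((cmod (s - m))\<^sup>2 - r\<^sup>2)"
proof -
  obtain a b where q1: "q1 = Complex a b" by (cases q1)
  obtain c d where m: "m = Complex c d" by (cases m)
  obtain x y where s: "s = Complex x y" by (cases s)
  have "q0 + Re (q1 * (m + of_real r * u)) + q2 * (cmod (m + of_real r * u))\<^sup>2 = 0"
    if "cmod u = 1" for u
    using h[of "m + of_real r * u"] that r by (simp add: norm_mult)
  from this[of 1] this[of "-1"] this[of \<i>] this[of "-\<i>"]
  have H1: "q0 + (a * (c + r) - b * d) + q2 * ((c + r)\<^sup>2 + d\<^sup>2) = 0"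
    and H2: "q0 + (a * (c - r) - b * d) + q2 * ((c - r)\<^sup>2 + d\<^sup>2) = 0"
    and H3: "q0 + (a * c - b * (d + r)) + q2 * (c\<^sup>2 + (d + r)\<^sup>2) = 0"
    and H4: "q0 + (a * c - b * (d - r)) + q2 * (c\<^sup>2 + (d - r)\<^sup>2) = 0"
    by (simp_all add: q1 m cmod_power2)
  have "r * (2 * a + 4 * q2 * c) = 0"
    using H1 H2 by algebra
  then have A: "a = -2 * q2 * c"
    using r by simp
  have "r * (-2 * b + 4 * q2 * d) = 0"
    using H3 H4 by algebra
  then have B: "b = 2 * q2 * d"
    using r by (auto simp: algebra_simps)
  have C: "q0 = q2 * (c\<^sup>2 + d\<^sup>2 - r\<^sup>2)"
    using H1 A B by (simp add: algebra_simps power2_eq_square)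
  show ?thesis
    unfolding q1 m s cmod_power2 using A B C by (simp add: algebra_simps power2_eq_square)
qed

lemma Im_sesquilinear_expansion:
  fixes X0 X Y Z s :: complex
  shows "Im (X0 + X * s + Y * cnj s + Z * (s * cnj s))
    = Im X0 + Re ((- \<i> * (X - cnj Y)) * s) + Im Z * (cmod s)\<^sup>2"
  unfolding cmod_power2 by (simp add: algebra_simps power2_eq_square)

lemma Im_sesquilinear_vanishing_on_circle:
  fixes c0 c1 d0 d1 m :: complex and r :: real
  assumes "r > 0" "c0 \<noteq> 0" "d0 \<noteq> 0"
    and vanish: "\<And>s. cmod (s - m) = r
      \<Longrightarrow> Im (cnj (c0 * cnj d0) * ((c0 + s * c1) * cnj (d0 + s * d1))) = 0"
  shows "(\<exists>s. cmod (s - m) = r \<and> c0 + s * c1 = 0) \<or> d0 * c1 = c0 * d1"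
proof -
  define \<Omega> where "\<Omega> = cnj (c0 * cnj d0)"
  define q0 where "q0 = Im (\<Omega> * c0 * cnj d0)"
  define q1 where "q1 = - \<i> * (\<Omega> * c1 * cnj d0 - cnj (\<Omega> * c0 * cnj d1))"
  define q2 where "q2 = Im (\<Omega> * c1 * cnj d1)"
  have expand: "Im (\<Omega> * ((c0 + s * c1) * cnj (d0 + s * d1))) = q0 + Re (q1 * s) + q2 * (cmod s)\<^sup>2"
    for s
  proof -
    have "\<Omega> * ((c0 + s * c1) * cnj (d0 + s * d1)) = \<Omega> * c0 * cnj d0 + (\<Omega> * c1 * cnj d0) * s
        + (\<Omega> * c0 * cnj d1) * cnj s + (\<Omega> * c1 * cnj d1) * (s * cnj s)"
      by (simp add: algebra_simps)
    then show ?thesis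
      unfolding q0_def q1_def q2_def by (simp only: Im_sesquilinear_expansion)
  qed
  have circle: "q0 + Re (q1 * s) + q2 * (cmod s)\<^sup>2 = q2 * ((cmod (s - m))\<^sup>2 - r\<^sup>2)" for s
    using real_quadratic_vanishing_on_circle[OF \<open>r > 0\<close>] vanish expand
    unfolding \<Omega>_def by metis
  show ?thesis
  proof (cases "q2 = 0")
    case False
    then have "c1 \<noteq> 0"
      by (auto simp: q2_def)
    define s where "s = - c0 / c1"
    have "c0 + s * c1 = 0"
      using \<open>c1 \<noteq> 0\<close> by (simp add: s_def)
    then have "q2 * ((cmod (s - m))\<^sup>2 - r\<^sup>2) = 0"
      using circle[of s] expand[of s] by simp
    then have "cmod (s - m) = r"
      using False \<open>r > 0\<close> by (simp add: power2_eq_iff_nonneg)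
    then show ?thesis
      using \<open>c0 + s * c1 = 0\<close> by blast
  next
    case True
    then have linear: "q0 + Re (q1 * s) = 0" for s
      using circle[of s] by simp
    then have "q0 = 0"
      using linear[of 0] by simp
    then have "Re q1 = 0" "Im q1 = 0"
      using linear[of 1] linear[of \<i>] by simp_all
    then have "\<Omega> * c1 * cnj d0 = cnj (\<Omega> * c0 * cnj d1)"
      by (simp add: q1_def complex_eq_iff)
    moreover have "cnj c0 * cnj d0 * (d0 * c1 - c0 * d1) = \<Omega> * c1 * cnj d0 - cnj (\<Omega> * c0 * cnj d1)"
      unfolding \<Omega>_def by (simp add: algebra_simps)
    ultimately show ?thesis
      using assms(2,3) by simp
  qed
qed

lemma det2_hinner_exchange:
  "det2 u z * hinner v x - hinner u x * det2 v z = hinner z x * det2 u v"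
  by (simp add: det2_def hinner_def algebra_simps)

text \<open>If the expression were nonzero, the lines xa and xy of A would contain points q, r
  with w on the line qr.\<close>

lemma linearly_closed_Im_degenerate:
  assumes lc: "linearly_closed A" and "x \<in> A" "a \<in> A" "y \<in> A" "w \<in> S3" "w \<notin> A"
    and R: "det2 (a - x) (y - x) \<noteq> 0"
  shows "Im (cnj (hinner (a - x) x * cnj (det2 (a - x) (x - w)))
    * (hinner (y - x) x * cnj (det2 (y - x) (x - w)))) = 0"
proof (rule ccontr)
  assume D: "\<not> ?thesis"
  have "x \<noteq> a" "x \<noteq> y"
    using R by (auto simp: det2_def)
  have "x \<in> S3"
    using assms linearly_closed_subset_S3 by blast
  have "det2 (x - w) (a - w) \<noteq> 0" "det2 (x - w) (y - w) \<noteq> 0"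
    using linearly_closed_mem_if_det2_eq_0[OF lc \<open>x \<in> A\<close>] assms \<open>x \<noteq> a\<close> \<open>x \<noteq> y\<close> by blast+
  then have Q: "det2 (a - x) (x - w) \<noteq> 0" and P: "det2 (x - w) (y - x) \<noteq> 0"
    by (simp_all add: det2_def algebra_simps)
  obtain s t where "s \<noteq> 0" and q: "x + cscale s (a - x) \<in> S3" and r: "x + cscale t (y - x) \<in> S3"
    and collinear: "det2 (x - w + cscale s (a - x)) (x - w + cscale t (y - x)) = 0"
    using S3_points_collinear_with_point[OF \<open>x \<in> S3\<close> R Q P D] by blast
  have "x + cscale s (a - x) \<in> A" "x + cscale t (y - x) \<in> A"
    using linearly_closed_add_cscale_mem[OF lc] assms \<open>x \<noteq> a\<close> \<open>x \<noteq> y\<close> q r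
    by blast+
  moreover have "x + cscale s (a - x) \<noteq> x + cscale t (y - x)"
  proof
    assume "x + cscale s (a - x) = x + cscale t (y - x)"
    then have "s * det2 (a - x) (y - x) = t * det2 (y - x) (y - x)"
      by (metis add_left_cancel det2_cscale_left)
    then show False
      using \<open>s \<noteq> 0\<close> R by (simp add: det2_self)
  qed
  moreover have "det2 (x + cscale s (a - x) - w) (x + cscale t (y - x) - w) = 0"
    using collinear by (simp add: algebra_simps)
  ultimately show False
    using linearly_closed_mem_if_det2_eq_0[OF lc] \<open>w \<in> S3\<close> \<open>w \<notin> A\<close> by blast
qed

lemma linearly_closed_Im_degenerate_along_line:
  assumes lc: "linearly_closed A" and "a \<in> A" "b \<in> A" "a \<noteq> b" "x \<in> A" "w \<in> S3" "w \<notin> A"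
    and "det2 (a - x) (b - a) \<noteq> 0" "a + cscale s (b - a) \<in> S3"
  shows "Im (cnj (hinner (a - x) x * cnj (det2 (a - x) (x - w)))
    * (hinner (a + cscale s (b - a) - x) x * cnj (det2 (a + cscale s (b - a) - x) (x - w)))) = 0"
proof (cases "s = 0")
  case True
  then show ?thesis
    by (simp add: algebra_simps)
next
  case False
  have "a + cscale s (b - a) \<in> A"
    using linearly_closed_add_cscale_mem[OF lc \<open>a \<in> A\<close> \<open>b \<in> A\<close> \<open>a \<noteq> b\<close>] assms(9) .
  moreover have "det2 (a - x) (a + cscale s (b - a) - x) = s * det2 (a - x) (b - a)"
    by (simp add: det2_def cscale_def algebra_simps)
  then have "det2 (a - x) (a + cscale s (b - a) - x) \<noteq> 0"
    using assms(8) False by simp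
  ultimately show ?thesis
    by (rule linearly_closed_Im_degenerate[OF lc \<open>x \<in> A\<close> \<open>a \<in> A\<close> _ \<open>w \<in> S3\<close> \<open>w \<notin> A\<close>])
qed

lemma linearly_closed_S3_subset_if_not_collinear:
  assumes lc: "linearly_closed A" and "a \<in> A" "b \<in> A" "a \<noteq> b" "x \<in> A"
    and x: "x \<notin> cline a (b - a)"
  shows "S3 \<subseteq> A"
proof
  fix w
  assume "w \<in> S3"
  show "w \<in> A"
  proof (rule ccontr)
    assume "w \<notin> A"
    define e where "e = b - a"
    have "a \<in> S3" "b \<in> S3" "x \<in> S3"
      using assms linearly_closed_subset_S3 by blast+
    have "a + e \<in> S3" "e \<noteq> 0"
      using \<open>b \<in> S3\<close> \<open>a \<noteq> b\<close> by (simp_all add: e_def)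
    then obtain m r where "r > 0" and circle: "\<And>s. a + cscale s e \<in> S3 \<longleftrightarrow> cmod (s - m) = r"
      using S3_points_of_line_form_circle[OF \<open>a \<in> S3\<close>] by blast
    have off_line: "x \<noteq> a + cscale s e" for s
      using x by (auto simp: e_def mem_cline_iff)
    have "det2 (a - x) e \<noteq> 0"
      using det2_ne_0_if_not_mem_cline x \<open>e \<noteq> 0\<close> by (simp add: e_def)
    define c0 where "c0 = hinner (a - x) x"
    define c1 where "c1 = hinner e x"
    define d0 where "d0 = det2 (a - x) (x - w)"
    define d1 where "d1 = det2 e (x - w)"
    have along: "hinner (a + cscale s e - x) x = c0 + s * c1"
      "det2 (a + cscale s e - x) (x - w) = d0 + s * d1" for s
      by (simp_all add: c0_def c1_def d0_def d1_def hinner_def det2_def cscale_def algebra_simps)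
    have "x \<noteq> a"
      using off_line[of 0] by simp
    then have "c0 \<noteq> 0"
      using S3_eq_if_hinner_diff_eq_0[OF \<open>a \<in> S3\<close> \<open>x \<in> S3\<close>] by (auto simp: c0_def)
    have "det2 (x - w) (a - w) \<noteq> 0"
      using linearly_closed_mem_if_det2_eq_0[OF lc \<open>x \<in> A\<close> \<open>a \<in> A\<close> \<open>x \<noteq> a\<close> \<open>w \<in> S3\<close>]
        \<open>w \<notin> A\<close> by blast
    then have "d0 \<noteq> 0"
      by (simp add: d0_def det2_def algebra_simps)
    have "Im (cnj (c0 * cnj d0) * ((c0 + s * c1) * cnj (d0 + s * d1))) = 0"
      if "cmod (s - m) = r" for s
    proof -
      have "a + cscale s e \<in> S3"
        using circle that by simp
      then have "Im (cnj (hinner (a - x) x * cnj (det2 (a - x) (x - w)))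
          * (hinner (a + cscale s e - x) x * cnj (det2 (a + cscale s e - x) (x - w)))) = 0"
        using linearly_closed_Im_degenerate_along_line[OF lc \<open>a \<in> A\<close> \<open>b \<in> A\<close> \<open>a \<noteq> b\<close>
            \<open>x \<in> A\<close> \<open>w \<in> S3\<close> \<open>w \<notin> A\<close>, folded e_def] \<open>det2 (a - x) e \<noteq> 0\<close>
        by blast
      then show ?thesis
        by (simp only: along flip: c0_def d0_def)
    qed
    then consider s where "cmod (s - m) = r" "c0 + s * c1 = 0" | "d0 * c1 = c0 * d1"
      using Im_sesquilinear_vanishing_on_circle[OF \<open>r > 0\<close> \<open>c0 \<noteq> 0\<close> \<open>d0 \<noteq> 0\<close>] by blast
    then show False
    proof cases
      case (1 s)
      then have "a + cscale s e \<in> S3" "hinner (a + cscale s e - x) x = 0"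
        using circle along(1) by simp_all
      then have "a + cscale s e = x"
        using S3_eq_if_hinner_diff_eq_0 \<open>x \<in> S3\<close> by blast
      then show False
        using off_line[of s] by simp
    next
      case 2
      then have "hinner (x - w) x * det2 (a - x) e = 0"
        using det2_hinner_exchange[of "a - x" "x - w" e x] by (simp add: c0_def c1_def d0_def d1_def)
      then have "hinner (w - x) x = 0"
        using \<open>det2 (a - x) e \<noteq> 0\<close> by (simp add: hinner_diff_left)
      then have "w = x"
        using S3_eq_if_hinner_diff_eq_0 \<open>w \<in> S3\<close> \<open>x \<in> S3\<close> by blast
      then show False
        using \<open>w \<notin> A\<close> \<open>x \<in> A\<close> by blast
    qed
  qed
qed

theorem proposition3p3:
  fixes A :: "(complex \<times> complex) set"
  assumes "linearly_closed A" and "A \<noteq> S3"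
  shows "A = {} \<or> (\<exists>x. A = {x}) \<or> abstract_line A"
proof (rule ccontr)
  assume contra: "\<not> ?thesis"
  then obtain a where "a \<in> A"
    by blast
  moreover have "A \<noteq> {a}"
    using contra by blast
  ultimately obtain b where "b \<in> A" "a \<noteq> b"
    by blast
  have "A \<subseteq> S3"
    using assms(1) linearly_closed_subset_S3 by blast
  have "cline a (b - a) \<inter> S3 \<subseteq> A"
    using linearly_closed_line_subset[OF assms(1) \<open>a \<in> A\<close> \<open>b \<in> A\<close> \<open>a \<noteq> b\<close>] .
  moreover have "abstract_line (cline a (b - a) \<inter> S3)"
    using abstract_line_through \<open>A \<subseteq> S3\<close> \<open>a \<in> A\<close> \<open>b \<in> A\<close> \<open>a \<noteq> b\<close> by blast
  moreover have "\<not> abstract_line A"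
    using contra by blast
  ultimately have "\<not> A \<subseteq> cline a (b - a)"
    using \<open>A \<subseteq> S3\<close> by (metis Int_absorb2 Int_mono order_refl subset_antisym)
  then obtain x where "x \<in> A" "x \<notin> cline a (b - a)"
    by blast
  then have "S3 \<subseteq> A"
    using linearly_closed_S3_subset_if_not_collinear[OF assms(1) \<open>a \<in> A\<close> \<open>b \<in> A\<close> \<open>a \<noteq> b\<close>]
    by blast
  then show False
    using assms(2) \<open>A \<subseteq> S3\<close> by blast
qed

end
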